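(* Let $p\ge 7$ be a prime. Then (i) $\displaystyle\sum_{k=1}^{p-1}\frac{H_{k-1}}{k^3}\equiv \sum_{k=1}^{p-1}\frac{H_k}{k^3}\equiv 0\pmod{p}$; (ii) $\displaystyle\sum_{k=1}^{p-1}\frac{H_k^3}{k}\equiv\frac{3}{2}\sum_{k=1}^{p-1}\frac{H_k^2}{k^2}\pmod{p}$; (iii) $\displaystyle\sum_{k=1}^{p-1}\frac{H_{k-1,3}}{k}\equiv \sum_{k=1}^{p-1}\frac{H_{k,3}}{k}\equiv 0\pmod{p}$; (iv) $\displaystyle\sum_{k=1}^{p-1}\frac{H_k}{k^2}\equiv \sum_{k=1}^{p-1}\frac{H_k^2}{k}\pmod{p^2}$.
   Context: For positive integers $n,m$, $H_{n,m}=\sum_{k=1}^n 1/k^m$ and $H_n=H_{n,1}$; $H_0=H_{0,m}=0$. Congruences modulo $p^e$ are taken in the ring of rationals with denominators not divisible by $p$ ($a\equiv b\pmod{p^e}$ means $(a-b)/p^e$ is a rational with denominator prime to $p$). *)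

theory Defs
  imports Complex_Main "HOL-Computational_Algebra.Primes"
begin

definition Hm :: "nat \<Rightarrow> nat \<Rightarrow> rat" where
  "Hm n m = (\<Sum>k=1..n. 1 / (of_nat k) ^ m)"

definition H :: "nat \<Rightarrow> rat" where
  "H n = Hm n 1"

definition p_integral :: "nat \<Rightarrow> rat \<Rightarrow> bool" where
  "p_integral p x \<longleftrightarrow> \<not> (int p dvd snd (quotient_of x))"

definition cong_rat :: "rat \<Rightarrow> rat \<Rightarrow> nat \<Rightarrow> nat \<Rightarrow> bool" where
  "cong_rat a b p e \<longleftrightarrow> p_integral p ((a - b) / (of_nat p) ^ e)"

end

theory Submission
  imports Defs "HOL-Number_Theory.Cong"
begin

(* On top of this calculus the argument is
   the classical one:
   - reflection k <-> p - k gives 1/(p-k)^m == -1/k^m (mod p) for odd m, hence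
     H_{p-1,m} == 0 and H_{p-1-k,m} == H_{k,m} (mod p) for odd m;
   - doubling k -> 2k mod p permutes {1..p-1}, so H_{p-1,m} == 0 (mod p) whenever p does
     not divide 2^m - 1; for m = 4 this is where p >= 7 is needed;
   - a second-order reflection gives H_{p-1,3} == 0 (mod p^2);
   - for odd m, j the sums of H_{k-1,m}/k^j and of H_{k,m}/k^j add up to 0 (mod p) by
     reflection and differ by H_{p-1,m+j}; this yields (i) and (iii);
   - telescoping H_{p-1}^4 and H_{p-1}^3 and expanding binomially expresses the sums in
     (ii) and (iv) through quantities already known to vanish. *)

section \<open>The local ring Z_(p) and divisibility by powers of p\<close>

definition pint :: "nat \<Rightarrow> rat \<Rightarrow> bool" where
  "pint p x \<longleftrightarrow> (\<exists>a b::int. \<not> int p dvd b \<and> x = of_int a / of_int b)"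

lemma p_integral_iff_pint:
  assumes "prime p" shows "p_integral p x \<longleftrightarrow> pint p x"
proof
  assume "p_integral p x"
  obtain a b where q: "quotient_of x = (a, b)" by (cases "quotient_of x")
  then show "pint p x" using \<open>p_integral p x\<close> quotient_of_div[OF q]
    unfolding pint_def p_integral_def by auto
next
  assume "pint p x"
  then obtain a b :: int where nb: "\<not> int p dvd b" and x: "x = of_int a / of_int b"
    unfolding pint_def by auto
  obtain a' b' where q: "quotient_of x = (a', b')" by (cases "quotient_of x")
  have "b \<noteq> 0" "b' > 0" using nb quotient_of_denom_pos[OF q] by auto
  with x quotient_of_div[OF q] have "a * b' = a' * b"
    by (simp add: field_simps flip: of_int_mult of_int_eq_iff)
  hence "b' dvd a' * b" by (metis dvd_triv_right)
  hence "b' dvd b"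
    using quotient_of_coprime[OF q] by (metis coprime_commute coprime_dvd_mult_right_iff)
  hence "\<not> int p dvd b'" using nb dvd_trans by blast
  thus "p_integral p x" unfolding p_integral_def q by simp
qed

lemma pint_of_int: "prime p \<Longrightarrow> pint p (of_int a)"
  unfolding pint_def by (rule exI[of _ a], rule exI[of _ 1]) (auto simp: prime_gt_1_nat)

lemma pint_of_nat: "prime p \<Longrightarrow> pint p (of_nat a)"
  using pint_of_int[of p "int a"] by simp

lemma pint_inverse_int: "\<not> int p dvd a \<Longrightarrow> pint p (1 / of_int a)"
  unfolding pint_def by (rule exI[of _ 1], rule exI[of _ a]) simp

lemma prime_not_dvd_smaller: "0 < k \<Longrightarrow> k < p \<Longrightarrow> \<not> int p dvd int k"
  by (auto dest: zdvd_imp_le)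

lemma odd_prime_not_dvd_power2: "prime (p::nat) \<Longrightarrow> p \<noteq> 2 \<Longrightarrow> \<not> p dvd 2 ^ j"
  using prime_dvd_power primes_dvd_imp_eq two_is_prime_nat by blast

lemma pint_inverse_nat: "0 < k \<Longrightarrow> k < p \<Longrightarrow> pint p (1 / of_nat k)"
  using pint_inverse_int[of p "int k"] prime_not_dvd_smaller[of k p] by simp

lemma pint_add:
  assumes "prime p" "pint p x" "pint p y" shows "pint p (x + y)"
proof -
  obtain a b c d :: int where b: "\<not> int p dvd b" "x = of_int a / of_int b"
    and d: "\<not> int p dvd d" "y = of_int c / of_int d" using assms(2,3) unfolding pint_def by auto
  have "b \<noteq> 0" "d \<noteq> 0" using b d by auto
  hence "x + y = of_int (a * d + c * b) / of_int (b * d)" using b d by (simp add: field_simps)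
  moreover have "\<not> int p dvd b * d" using assms(1) b d by (simp add: prime_dvd_mult_iff)
  ultimately show ?thesis unfolding pint_def by blast
qed

lemma pint_mult:
  assumes "prime p" "pint p x" "pint p y" shows "pint p (x * y)"
proof -
  obtain a b c d :: int where b: "\<not> int p dvd b" "x = of_int a / of_int b"
    and d: "\<not> int p dvd d" "y = of_int c / of_int d" using assms(2,3) unfolding pint_def by auto
  hence "x * y = of_int (a * c) / of_int (b * d)" by simp
  moreover have "\<not> int p dvd b * d" using assms(1) b d by (simp add: prime_dvd_mult_iff)
  ultimately show ?thesis unfolding pint_def by blast
qed

lemma pint_uminus: "pint p x \<Longrightarrow> pint p (- x)"
  unfolding pint_def by (metis minus_divide_left of_int_minus)

lemma pint_pow: "prime p \<Longrightarrow> pint p x \<Longrightarrow> pint p (x ^ n)"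
  by (induction n) (auto intro: pint_mult pint_of_nat[of p 1, simplified])

lemma pint_sum: "prime p \<Longrightarrow> (\<And>i. i \<in> A \<Longrightarrow> pint p (f i)) \<Longrightarrow> pint p (sum f A)"
  by (induction A rule: infinite_finite_induct) (auto intro: pint_add pint_of_nat[of p 0, simplified])

lemma pint_inverse_power: "prime p \<Longrightarrow> 0 < k \<Longrightarrow> k < p \<Longrightarrow> pint p (1 / of_nat k ^ m)"
  using pint_pow[of p "1 / of_nat k" m] pint_inverse_nat[of k p] by (simp add: power_one_over)

definition pdvd :: "nat \<Rightarrow> nat \<Rightarrow> rat \<Rightarrow> bool" where
  "pdvd p e x \<longleftrightarrow> pint p (x / of_nat p ^ e)"

lemma cong_rat_iff_pdvd: "prime p \<Longrightarrow> cong_rat a b p e \<longleftrightarrow> pdvd p e (a - b)"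
  unfolding cong_rat_def pdvd_def by (simp add: p_integral_iff_pint)

lemma pdvd_0: "prime p \<Longrightarrow> pdvd p e 0"
  unfolding pdvd_def using pint_of_nat[of p 0] by simp

lemma pdvd_add: "prime p \<Longrightarrow> pdvd p e x \<Longrightarrow> pdvd p e y \<Longrightarrow> pdvd p e (x + y)"
  unfolding pdvd_def using pint_add[of p "x / of_nat p ^ e" "y / of_nat p ^ e"]
  by (simp add: add_divide_distrib)

lemma pdvd_diff: "prime p \<Longrightarrow> pdvd p e x \<Longrightarrow> pdvd p e y \<Longrightarrow> pdvd p e (x - y)"
  using pdvd_add[of p e x "- y"] pint_uminus[of p "y / of_nat p ^ e"] by (simp add: pdvd_def)

lemma pdvd_sum: "prime p \<Longrightarrow> (\<And>i. i \<in> A \<Longrightarrow> pdvd p e (f i)) \<Longrightarrow> pdvd p e (sum f A)"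
  by (induction A rule: infinite_finite_induct) (auto intro: pdvd_add pdvd_0)

lemma pdvd_mult_pint: "prime p \<Longrightarrow> pdvd p e x \<Longrightarrow> pint p y \<Longrightarrow> pdvd p e (y * x)"
  unfolding pdvd_def using pint_mult[of p y "x / of_nat p ^ e"] by (simp add: field_simps)

lemma pdvd_mult: "prime p \<Longrightarrow> pdvd p e x \<Longrightarrow> pdvd p f y \<Longrightarrow> pdvd p (e + f) (x * y)"
  unfolding pdvd_def using pint_mult[of p "x / of_nat p ^ e" "y / of_nat p ^ f"]
  by (simp add: power_add)

lemma pdvd_pow: "prime p \<Longrightarrow> pdvd p e x \<Longrightarrow> pdvd p (e * n) (x ^ n)"
  by (induction n) (auto simp: pdvd_def pint_of_nat[of p 1, simplified] dest: pdvd_mult)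

lemma pdvd_mono:
  assumes "prime p" "f \<le> e" "pdvd p e x" shows "pdvd p f x"
proof -
  have "x / of_nat p ^ f = of_nat (p ^ (e - f)) * (x / of_nat p ^ e)"
    using assms prime_gt_0_nat[of p] by (simp add: field_simps flip: power_add)
  moreover have "pint p (of_nat (p ^ (e - f)) * (x / of_nat p ^ e))"
    using assms(3) unfolding pdvd_def by (intro pint_mult pint_of_nat assms(1))
  ultimately show ?thesis unfolding pdvd_def by simp
qed

lemma pdvd_p_power_mult: "prime p \<Longrightarrow> pint p y \<Longrightarrow> pdvd p e (of_nat p ^ e * y)"
  using prime_gt_0_nat[of p] unfolding pdvd_def by simp

lemma pdvd_times_p: "prime p \<Longrightarrow> pdvd p e x \<Longrightarrow> pdvd p (Suc e) (of_nat p * x)"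
  using prime_gt_0_nat[of p] unfolding pdvd_def by simp

lemma pdvd_cancel_nat:
  assumes "prime p" "\<not> p dvd c" "pdvd p e (of_nat c * x)" shows "pdvd p e x"
proof -
  have "\<not> int p dvd int c" using assms(2) by simp
  hence "pdvd p e (1 / of_int (int c) * (of_nat c * x))"
    using pdvd_mult_pint[OF assms(1,3)] pint_inverse_int by blast
  moreover have "c \<noteq> 0" using assms(2) by (metis dvd_0_right)
  ultimately show ?thesis by simp
qed

lemma pdvd_cong_mult:
  assumes "prime p" "pdvd p e (x - x')" "pdvd p e (y - y')" "pint p x'" "pint p y"
  shows "pdvd p e (x * y - x' * y')"
proof -
  have "x * y - x' * y' = y * (x - x') + x' * (y - y')" by (simp add: algebra_simps)
  thus ?thesis using assms by (auto intro: pdvd_add pdvd_mult_pint)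
qed

lemma pdvd_inverse_cong:
  assumes "prime p" "\<not> int p dvd a" "\<not> int p dvd b" "[a = b] (mod int p)"
  shows "pdvd p 1 (1 / of_int a - 1 / of_int b)"
proof -
  obtain c where c: "b - a = int p * c" using assms(4) by (metis cong_iff_dvd_diff cong_sym dvdE)
  have "a \<noteq> 0" "b \<noteq> 0" using assms by auto
  hence "1 / of_int a - 1 / of_int b = of_nat p ^ 1 * (of_int c * (1 / of_int (a * b)) :: rat)"
    by (simp add: field_simps flip: of_int_diff of_int_mult c) (simp add: c)
  moreover have "\<not> int p dvd a * b" using assms by (simp add: prime_dvd_mult_iff)
  hence "pdvd p 1 (of_nat p ^ 1 * (of_int c * (1 / of_int (a * b))))"
    by (intro pdvd_p_power_mult pint_mult pint_of_int pint_inverse_int assms(1))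
  ultimately show ?thesis by simp
qed

section \<open>Harmonic sums modulo p\<close>

lemma Hm_Suc: "Hm (Suc n) m = Hm n m + 1 / of_nat (Suc n) ^ m"
  unfolding Hm_def by simp

lemma Hm_pred: "0 < k \<Longrightarrow> Hm (k - 1) m = Hm k m - 1 / of_nat k ^ m"
  using Hm_Suc[of "k - 1" m] by simp

lemma pint_Hm: "prime p \<Longrightarrow> n < p \<Longrightarrow> pint p (Hm n m)"
  unfolding Hm_def by (rule pint_sum) (auto intro: pint_inverse_power)

lemma sum_reflect:
  fixes p :: nat assumes "0 < p" shows "(\<Sum>k=1..p-1. f (p - k)) = (\<Sum>k=1..p-1. (f k :: rat))"
proof -
  have "(\<Sum>k=1..p-1. f k) = (\<Sum>k=1..p-1. f (p - 1 + 1 - k))" by (rule sum.atLeastAtMost_rev)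
  thus ?thesis using assms by simp
qed

lemma inverse_power_reflection:
  assumes "prime p" "odd m" "0 < k" "k < p"
  shows "pdvd p 1 (1 / of_nat (p - k) ^ m + 1 / of_nat k ^ m)"
proof -
  have pr: "prime (int p)" and m0: "m > 0" using assms by (auto intro!: Nat.gr0I)
  have "\<not> int p dvd int (p - k)" "\<not> int p dvd int k"
    using prime_not_dvd_smaller[of "p - k" p] prime_not_dvd_smaller[of k p] assms by auto
  hence units: "\<not> int p dvd int (p - k) ^ m" "\<not> int p dvd - (int k ^ m)"
    using prime_dvd_power_iff[OF pr m0] by auto
  have "[int (p - k) = - int k] (mod int p)"
    using assms by (simp add: cong_iff_dvd_diff of_nat_diff)
  hence "[int (p - k) ^ m = (- int k) ^ m] (mod int p)" by (rule cong_pow)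
  hence "[int (p - k) ^ m = - (int k ^ m)] (mod int p)" using assms(2) by simp
  from pdvd_inverse_cong[OF assms(1) units this] show ?thesis by simp
qed

lemma Hm_full_odd:
  assumes "prime p" "p \<noteq> 2" "odd m"
  shows "pdvd p 1 (Hm (p - 1) m)"
proof -
  have "of_nat 2 * Hm (p - 1) m = (\<Sum>k=1..p-1. 1 / of_nat (p - k) ^ m + 1 / of_nat k ^ m)"
    using sum_reflect[of p "\<lambda>k. 1 / of_nat k ^ m"] prime_gt_0_nat[OF assms(1)]
    by (simp add: Hm_def sum.distrib)
  moreover have "pdvd p 1 (\<Sum>k=1..p-1. 1 / of_nat (p - k) ^ m + 1 / of_nat k ^ m)"
    using assms by (intro pdvd_sum inverse_power_reflection) auto
  moreover have "\<not> p dvd 2" using odd_prime_not_dvd_power2[OF assms(1,2), of 1] by simp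
  ultimately show ?thesis using pdvd_cancel_nat[OF assms(1)] by metis
qed

lemma doubling_permutes_units:
  fixes p :: nat
  assumes "prime p" "p \<noteq> 2"
  shows "bij_betw (\<lambda>k. 2 * k mod p) {1..p-1} {1..p-1}"
proof -
  let ?A = "{1..p-1}" and ?g = "\<lambda>k. 2 * k mod p"
  have "\<not> p dvd 2" using odd_prime_not_dvd_power2[OF assms, of 1] by simp
  hence coprime2: "coprime 2 p" by (metis assms(1) coprime_commute prime_imp_coprime_nat)
  have maps_to: "?g k \<in> ?A" if "k \<in> ?A" for k
  proof -
    have "\<not> p dvd k" using that by (auto dest: dvd_imp_le)
    hence "\<not> p dvd 2 * k" using \<open>\<not> p dvd 2\<close> assms(1) by (simp add: prime_dvd_mult_iff)
    hence "?g k \<noteq> 0" "?g k < p" using prime_gt_0_nat[OF assms(1)] by (auto simp: dvd_eq_mod_eq_0)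
    thus ?thesis by auto
  qed
  have inj: "inj_on ?g ?A"
  proof
    fix k j assume "k \<in> ?A" "j \<in> ?A" "?g k = ?g j"
    hence "[k = j] (mod p)" "k < p" "j < p"
      using cong_mult_lcancel_nat[OF coprime2] unfolding cong_def by auto
    thus "k = j" by (simp add: cong_def)
  qed
  moreover have "?g ` ?A = ?A" using inj maps_to by (intro endo_inj_surj) auto
  ultimately show ?thesis by (rule bij_betw_imageI)
qed

(* H_{p-1,m} == 0 (mod p) as soon as p is odd and does not divide 2^m - 1: by the doubling
   permutation, H_{p-1,m} == sum_k 1/(2k)^m = H_{p-1,m} / 2^m (mod p). *)
lemma Hm_full_by_doubling:
  assumes "prime p" "p \<noteq> 2" "\<not> p dvd (2 ^ m - 1)"
  shows "pdvd p 1 (Hm (p - 1) m)"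
proof -
  let ?A = "{1..p-1}" and ?g = "\<lambda>k. 2 * k mod p"
  have pr: "prime (int p)" using assms(1) by simp
  note bij = doubling_permutes_units[OF assms(1,2)]
  have permuted: "(\<Sum>k\<in>?A. 1 / of_nat (?g k) ^ m) = Hm (p - 1) m"
    unfolding Hm_def by (rule sum.reindex_bij_betw[OF bij])
  have "pdvd p 1 (\<Sum>k\<in>?A. 1 / of_nat (?g k) ^ m - 1 / of_nat (2 * k) ^ m)"
  proof (rule pdvd_sum[OF assms(1)])
    fix k assume k: "k \<in> ?A"
    have "?g k \<in> ?A" using k bij_betwE[OF bij] by blast
    hence "\<not> p dvd ?g k" "?g k \<noteq> 0" by (auto dest: dvd_imp_le)
    hence "\<not> p dvd ?g k" "\<not> p dvd 2 * k" by (auto simp: dvd_eq_mod_eq_0)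
    hence "\<not> int p dvd int (?g k) ^ m" "\<not> int p dvd int (2 * k) ^ m"
      using prime_dvd_power[OF pr] int_dvd_int_iff by blast+
    moreover have "[int (?g k) ^ m = int (2 * k) ^ m] (mod int p)"
      by (intro cong_pow) (simp only: cong_int_iff cong_mod_left cong_refl)
    ultimately have "pdvd p 1 (1 / of_int (int (?g k) ^ m) - 1 / of_int (int (2 * k) ^ m))"
      using pdvd_inverse_cong[OF assms(1)] by blast
    thus "pdvd p 1 (1 / of_nat (?g k) ^ m - 1 / of_nat (2 * k) ^ m)" by simp
  qed
  moreover have "(\<Sum>k\<in>?A. 1 / (of_nat (2 * k) :: rat) ^ m) = Hm (p - 1) m / 2 ^ m"
    unfolding Hm_def by (simp add: sum_divide_distrib power_mult_distrib mult.commute)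
  ultimately have "pdvd p 1 (Hm (p - 1) m - Hm (p - 1) m / 2 ^ m)"
    by (simp only: sum_subtractf permuted)
  hence "pdvd p 1 (of_nat (2 ^ m) * (Hm (p - 1) m - Hm (p - 1) m / 2 ^ m))"
    by (rule pdvd_mult_pint[OF assms(1) _ pint_of_nat[OF assms(1)]])
  moreover have "of_nat (2 ^ m) * (h - h / 2 ^ m) = of_nat (2 ^ m - 1) * h" for h :: rat
    by (simp add: of_nat_diff algebra_simps)
  ultimately show ?thesis using pdvd_cancel_nat[OF assms(1,3)] by simp
qed

(* Second-order reflection: with y = p - k,
   1/y^3 + 1/k^3 + 3p/k^4 = p^2 (3p^2 - 8pk + 6k^2) / (k^4 y^3) == 0 (mod p^2). *)
lemma inverse_cube_reflection:
  assumes "prime p" "0 < k" "k < p"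
  shows "pdvd p 2 (1 / of_nat (p - k) ^ 3 + 1 / of_nat k ^ 3 + 3 * of_nat p / of_nat k ^ 4)"
proof -
  define x y :: rat where "x = of_nat k" and "y = of_nat (p - k)"
  have "x \<noteq> 0" "y \<noteq> 0" and p_eq: "of_nat p = x + y"
    using assms by (auto simp: x_def y_def of_nat_diff)
  define Z where "Z = (3 * (x + y) ^ 2 - 8 * (x + y) * x + 6 * x ^ 2) * ((1 / x) ^ 4 * (1 / y) ^ 3)"
  have "1 / y ^ 3 + 1 / x ^ 3 + 3 * (x + y) / x ^ 4 = (x + y) ^ 2 * Z"
    using \<open>x \<noteq> 0\<close> \<open>y \<noteq> 0\<close> unfolding Z_def
    by (simp add: field_simps power2_eq_square power3_eq_cube power4_eq_xxxx)
  hence identity: "1 / y ^ 3 + 1 / x ^ 3 + 3 * of_nat p / x ^ 4 = of_nat p ^ 2 * Z"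
    by (simp only: p_eq)
  have "pint p Z"
  proof -
    have "3 * (x + y) ^ 2 - 8 * (x + y) * x + 6 * x ^ 2
        = of_int (3 * int p ^ 2 - 8 * int p * int k + 6 * int k ^ 2)"
      by (simp only: p_eq[symmetric]) (simp add: x_def)
    moreover have "pint p (1 / x)" "pint p (1 / y)"
      using assms pint_inverse_nat[of k p] pint_inverse_nat[of "p - k" p] by (auto simp: x_def y_def)
    ultimately show ?thesis unfolding Z_def
      by (metis assms(1) pint_mult pint_of_int pint_pow)
  qed
  hence "pdvd p 2 (of_nat p ^ 2 * Z)" by (rule pdvd_p_power_mult[OF assms(1)])
  thus ?thesis using identity by (simp only: x_def y_def)
qed

(* H_{p-1,3} == 0 (mod p^2), given H_{p-1,4} == 0 (mod p): summing the second-order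
   reflection over k gives 2 H_{p-1,3} + 3p H_{p-1,4} == 0 (mod p^2). *)
lemma Hm_3_full_mod_p2:
  assumes "prime p" "p \<noteq> 2" "pdvd p 1 (Hm (p - 1) 4)"
  shows "pdvd p 2 (Hm (p - 1) 3)"
proof -
  let ?A = "{1..p-1}"
  have sum_eq: "of_nat 2 * Hm (p - 1) 3 + of_nat p * (3 * Hm (p - 1) 4)
      = (\<Sum>k\<in>?A. 1 / of_nat (p - k) ^ 3 + 1 / of_nat k ^ 3 + 3 * of_nat p / of_nat k ^ 4)"
    using sum_reflect[of p "\<lambda>k. 1 / of_nat k ^ 3"] prime_gt_0_nat[OF assms(1)]
    by (simp add: Hm_def sum.distrib sum_distrib_left mult.commute)
  have "pdvd p 2 (\<Sum>k\<in>?A. 1 / of_nat (p - k) ^ 3 + 1 / of_nat k ^ 3 + 3 * of_nat p / of_nat k ^ 4)"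
    using assms(1) by (intro pdvd_sum inverse_cube_reflection) auto
  moreover have "pdvd p 2 (of_nat p * (3 * Hm (p - 1) 4))"
    using pdvd_times_p[OF assms(1) pdvd_mult_pint[OF assms(1,3) pint_of_nat[OF assms(1), of 3]]]
    by (simp add: numeral_2_eq_2)
  ultimately have "pdvd p 2 (of_nat 2 * Hm (p - 1) 3 + of_nat p * (3 * Hm (p - 1) 4)
      - of_nat p * (3 * Hm (p - 1) 4))"
    unfolding sum_eq by (rule pdvd_diff[OF assms(1)])
  hence "pdvd p 2 (of_nat 2 * Hm (p - 1) 3)" by simp
  thus ?thesis using odd_prime_not_dvd_power2[OF assms(1,2), of 1] pdvd_cancel_nat[OF assms(1)] by simp
qed

lemma Hm_reflection:
  assumes "prime p" "odd m" "pdvd p 1 (Hm (p - 1) m)"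
  shows "k \<le> p - 1 \<Longrightarrow> pdvd p 1 (Hm (p - 1 - k) m - Hm k m)"
proof (induction k)
  case 0 thus ?case using assms by (simp add: Hm_def)
next
  case (Suc k)
  have step: "Hm (p - 1 - Suc k) m - Hm (Suc k) m
     = (Hm (p - 1 - k) m - Hm k m) - (1 / of_nat (p - Suc k) ^ m + 1 / of_nat (Suc k) ^ m)"
    using Suc.prems Hm_Suc[of "p - 1 - Suc k" m] by (simp add: Suc_diff_Suc Hm_Suc)
  show ?case unfolding step
  proof (rule pdvd_diff[OF assms(1)])
    show "pdvd p 1 (Hm (p - 1 - k) m - Hm k m)" using Suc by simp
    show "pdvd p 1 (1 / of_nat (p - Suc k) ^ m + 1 / of_nat (Suc k) ^ m)"
      using Suc.prems by (intro inverse_power_reflection assms(1,2)) auto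
  qed
qed

(* For odd m, j: sum H_{k-1,m}/k^j + sum H_{k,m}/k^j == 0 (mod p), by pairing k with p - k. *)
lemma reflected_sums:
  assumes "prime p" "odd m" "odd j" "pdvd p 1 (Hm (p - 1) m)"
  shows "pdvd p 1 ((\<Sum>k=1..p-1. Hm (k - 1) m / of_nat k ^ j) + (\<Sum>k=1..p-1. Hm k m / of_nat k ^ j))"
proof -
  let ?A = "{1..p-1}"
  have "(\<Sum>k\<in>?A. Hm (k - 1) m / of_nat k ^ j) = (\<Sum>k\<in>?A. Hm (p - 1 - k) m / of_nat (p - k) ^ j)"
    using sum_reflect[of p "\<lambda>k. Hm (k - 1) m / of_nat k ^ j"] prime_gt_0_nat[OF assms(1)]
    by (simp add: diff_diff_add add.commute)
  moreover have "pdvd p 1 (\<Sum>k\<in>?A. Hm (p - 1 - k) m / of_nat (p - k) ^ j + Hm k m / of_nat k ^ j)"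
  proof (rule pdvd_sum[OF assms(1)])
    fix k assume k: "k \<in> ?A"
    have "pdvd p 1 (Hm (p - 1 - k) m * (1 / of_nat (p - k) ^ j) - Hm k m * (- (1 / of_nat k ^ j)))"
      using k Hm_reflection[OF assms(1,2,4)] inverse_power_reflection[OF assms(1,3)]
      by (intro pdvd_cong_mult pint_Hm pint_inverse_power assms(1)) auto
    thus "pdvd p 1 (Hm (p - 1 - k) m / of_nat (p - k) ^ j + Hm k m / of_nat k ^ j)" by simp
  qed
  ultimately show ?thesis by (simp add: sum.distrib)
qed

(* Parts (i) and (iii): for odd m, j with H_{p-1,m+j} == 0 (mod p), both sums vanish mod p,
   since they add up to 0 and differ by H_{p-1,m+j}. *)
lemma odd_weight_sums:
  assumes "prime p" "p \<noteq> 2" "odd m" "odd j" "pdvd p 1 (Hm (p - 1) (m + j))"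
  shows "pdvd p 1 (\<Sum>k=1..p-1. Hm (k - 1) m / of_nat k ^ j)"
    and "pdvd p 1 (\<Sum>k=1..p-1. Hm k m / of_nat k ^ j)"
proof -
  define A B where "A = (\<Sum>k=1..p-1. Hm (k - 1) m / of_nat k ^ j)"
    and "B = (\<Sum>k=1..p-1. Hm k m / of_nat k ^ j)"
  have "B = (\<Sum>k=1..p-1. Hm (k - 1) m / of_nat k ^ j + 1 / of_nat k ^ (m + j))"
    unfolding B_def by (intro sum.cong) (auto simp: Hm_pred[simplified] diff_divide_distrib power_add)
  hence B_eq: "B = A + Hm (p - 1) (m + j)" unfolding A_def Hm_def by (simp add: sum.distrib)
  have "pdvd p 1 (A + B)"
    unfolding A_def B_def using assms Hm_full_odd by (intro reflected_sums) auto
  hence "pdvd p 1 (A + B - Hm (p - 1) (m + j))" by (rule pdvd_diff[OF assms(1) _ assms(5)])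
  hence "pdvd p 1 (of_nat 2 * A)" unfolding B_eq by simp
  hence "pdvd p 1 A" using odd_prime_not_dvd_power2[OF assms(1,2), of 1] pdvd_cancel_nat[OF assms(1)] by simp
  thus "pdvd p 1 A" "pdvd p 1 B" unfolding B_eq using assms(1,5) pdvd_add by auto
qed

section \<open>Telescoping powers of H_n\<close>

lemma H_pred: "0 < k \<Longrightarrow> H (k - 1) = H k - 1 / of_nat k"
  unfolding H_def using Hm_pred[of k 1] by simp

lemma H_power_telescope: "0 < r \<Longrightarrow> H n ^ r = (\<Sum>k=1..n. H k ^ r - H (k - 1) ^ r)"
  using sum_telescope''[of 0 n "\<lambda>k. H k ^ r"] by (simp add: H_def Hm_def)

lemma H_fourth_power_expansion:
  "H n ^ 4 = 4 * (\<Sum>k=1..n. H k ^ 3 / of_nat k) - 6 * (\<Sum>k=1..n. H k ^ 2 / of_nat k ^ 2)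
           + 4 * (\<Sum>k=1..n. H k / of_nat k ^ 3) - Hm n 4"
proof -
  have binomial: "h ^ 4 - (h - t) ^ 4 = 4 * h ^ 3 * t - 6 * h ^ 2 * t ^ 2 + 4 * h * t ^ 3 - t ^ 4"
    for h t :: rat by algebra
  have "H n ^ 4 = (\<Sum>k=1..n. 4 * (H k ^ 3 / of_nat k) - 6 * (H k ^ 2 / of_nat k ^ 2)
                     + 4 * (H k / of_nat k ^ 3) - 1 / of_nat k ^ 4)"
    unfolding H_power_telescope[of 4 n, simplified]
    by (intro sum.cong) (auto simp: H_pred[simplified] binomial power_one_over)
  thus ?thesis by (simp add: Hm_def sum.distrib sum_subtractf sum_distrib_left)
qed

lemma H_cube_expansion:
  "H n ^ 3 = 3 * (\<Sum>k=1..n. H k ^ 2 / of_nat k) - 3 * (\<Sum>k=1..n. H k / of_nat k ^ 2) + Hm n 3"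
proof -
  have binomial: "h ^ 3 - (h - t) ^ 3 = 3 * h ^ 2 * t - 3 * h * t ^ 2 + t ^ 3"
    for h t :: rat by algebra
  have "H n ^ 3 = (\<Sum>k=1..n. 3 * (H k ^ 2 / of_nat k) - 3 * (H k / of_nat k ^ 2) + 1 / of_nat k ^ 3)"
    unfolding H_power_telescope[of 3 n, simplified]
    by (intro sum.cong) (auto simp: H_pred[simplified] binomial power_one_over)
  thus ?thesis by (simp add: Hm_def sum.distrib sum_subtractf sum_distrib_left)
qed

(* Part (ii): 4 sum H_k^3/k - 6 sum H_k^2/k^2 = H_{p-1}^4 - 4 sum H_k/k^3 + H_{p-1,4}, and every
   term on the right vanishes mod p. *)
lemma cube_sum_vs_square_sum:
  assumes "prime p" "p \<noteq> 2" "pdvd p 1 (Hm (p - 1) 4)"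
    and "pdvd p 1 (\<Sum>k=1..p-1. H k / of_nat k ^ 3)"
  shows "pdvd p 1 ((\<Sum>k=1..p-1. H k ^ 3 / of_nat k) - 3/2 * (\<Sum>k=1..p-1. H k ^ 2 / of_nat k ^ 2))"
proof -
  define X Y B where "X = (\<Sum>k=1..p-1. H k ^ 3 / of_nat k)"
    and "Y = (\<Sum>k=1..p-1. H k ^ 2 / of_nat k ^ 2)" and "B = (\<Sum>k=1..p-1. H k / of_nat k ^ 3)"
  have "pdvd p (1 * 4) (H (p - 1) ^ 4)"
    using Hm_full_odd[OF assms(1,2), of 1] by (intro pdvd_pow assms(1)) (simp add: H_def)
  hence "pdvd p 1 (H (p - 1) ^ 4)" by (rule pdvd_mono[OF assms(1), rotated]) simp
  moreover have "pdvd p 1 (of_nat 4 * B)"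
    using assms(4) unfolding B_def by (intro pdvd_mult_pint pint_of_nat assms(1))
  ultimately have "pdvd p 1 (H (p - 1) ^ 4 - of_nat 4 * B + Hm (p - 1) 4)"
    by (intro pdvd_add pdvd_diff assms(1,3))
  also have "H (p - 1) ^ 4 - of_nat 4 * B + Hm (p - 1) 4 = of_nat (2 ^ 2) * (X - 3/2 * Y)"
    unfolding H_fourth_power_expansion X_def Y_def B_def by simp
  finally show ?thesis
    using odd_prime_not_dvd_power2[OF assms(1,2)] pdvd_cancel_nat[OF assms(1)]
    unfolding X_def Y_def by blast
qed

(* Part (iv): 3 (sum H_k/k^2 - sum H_k^2/k) = H_{p-1,3} - H_{p-1}^3 vanishes mod p^2. *)
lemma linear_sum_vs_square_sum:
  assumes "prime p" "p \<noteq> 2" "p \<noteq> 3" "pdvd p 2 (Hm (p - 1) 3)"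
  shows "pdvd p 2 ((\<Sum>k=1..p-1. H k / of_nat k ^ 2) - (\<Sum>k=1..p-1. H k ^ 2 / of_nat k))"
proof -
  define W Z where "W = (\<Sum>k=1..p-1. H k / of_nat k ^ 2)" and "Z = (\<Sum>k=1..p-1. H k ^ 2 / of_nat k)"
  have "pdvd p (1 * 3) (H (p - 1) ^ 3)"
    using Hm_full_odd[OF assms(1,2), of 1] by (intro pdvd_pow assms(1)) (simp add: H_def)
  hence "pdvd p 2 (H (p - 1) ^ 3)" by (rule pdvd_mono[OF assms(1), rotated]) simp
  hence "pdvd p 2 (Hm (p - 1) 3 - H (p - 1) ^ 3)" by (rule pdvd_diff[OF assms(1,4)])
  also have "Hm (p - 1) 3 - H (p - 1) ^ 3 = of_nat 3 * (W - Z)"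
    unfolding H_cube_expansion W_def Z_def by simp
  finally have "pdvd p 2 (of_nat 3 * (W - Z))" .
  moreover have "\<not> p dvd 3" using assms(1,3) primes_dvd_imp_eq[of p 3] by auto
  ultimately show ?thesis using pdvd_cancel_nat[OF assms(1)] unfolding W_def Z_def by blast
qed

theorem lemma2p3:
  fixes p :: nat
  assumes "prime p" and "p \<ge> 7"
  shows "cong_rat (\<Sum>k=1..p-1. H (k-1) / of_nat k ^ 3) 0 p 1
       \<and> cong_rat (\<Sum>k=1..p-1. H k / of_nat k ^ 3) 0 p 1
       \<and> cong_rat (\<Sum>k=1..p-1. H k ^ 3 / of_nat k)
                  (3/2 * (\<Sum>k=1..p-1. H k ^ 2 / of_nat k ^ 2)) p 1
       \<and> cong_rat (\<Sum>k=1..p-1. Hm (k-1) 3 / of_nat k) 0 p 1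
       \<and> cong_rat (\<Sum>k=1..p-1. Hm k 3 / of_nat k) 0 p 1
       \<and> cong_rat (\<Sum>k=1..p-1. H k / of_nat k ^ 2)
                  (\<Sum>k=1..p-1. H k ^ 2 / of_nat k) p 2"
proof -
  have odd: "p \<noteq> 2" "p \<noteq> 3" using assms(2) by auto
  have "\<not> p dvd 2 ^ 4 - 1"
  proof
    assume "p dvd 2 ^ 4 - 1"
    hence "p dvd 3 * 5" by simp
    hence "p dvd 3 \<or> p dvd 5" by (rule prime_dvd_multD[OF assms(1)])
    hence "p \<le> 5" by (auto dest: dvd_imp_le)
    thus False using assms(2) by simp
  qed
  hence H4: "pdvd p 1 (Hm (p - 1) 4)" by (rule Hm_full_by_doubling[OF assms(1) odd(1)])
  have i: "pdvd p 1 (\<Sum>k=1..p-1. H (k - 1) / of_nat k ^ 3)" "pdvd p 1 (\<Sum>k=1..p-1. H k / of_nat k ^ 3)"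
    using odd_weight_sums[OF assms(1) odd(1), of 1 3] H4 by (simp_all add: H_def)
  have iii: "pdvd p 1 (\<Sum>k=1..p-1. Hm (k - 1) 3 / of_nat k)" "pdvd p 1 (\<Sum>k=1..p-1. Hm k 3 / of_nat k)"
    using odd_weight_sums[OF assms(1) odd(1), of 3 1] H4 by simp_all
  show ?thesis
    unfolding cong_rat_iff_pdvd[OF assms(1)] diff_0_right
    using i iii cube_sum_vs_square_sum[OF assms(1) odd(1) H4 i(2)]
      linear_sum_vs_square_sum[OF assms(1) odd Hm_3_full_mod_p2[OF assms(1) odd(1) H4]]
    by blast
qed

end
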